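(* Consider a mixture of two Bernoullis with the notation below, and let $T:=\{\boldsymbol\lambda: Z_1(\boldsymbol\lambda)<1\}$. The one-cluster regions $(\pi_1,\boldsymbol\mu_1,\boldsymbol\mu_2)$ with $\boldsymbol\lambda(\boldsymbol\mu_1)\in T$, $\boldsymbol\mu_2=\overline{\mathbf x}$ and $\pi_1=0$ are attractive for GD, given a small enough step size.
   Context: Model and data: - Let $B(\mathbf x\mid\boldsymbol\mu)=\prod_{i=1}^D\mu_i^{x_i}(1-\mu_i)^{1-x_i}$ for $\mathbf x\in\{0,1\}^D$ and $\boldsymbol\mu\in[0,1]^D$. - The true distribution is $p^*(\mathbf x)=\pi_1^*B(\mathbf x\mid\boldsymbol\mu_1^* )+\pi_2^*B(\mathbf x\mid\boldsymbol\mu_2^* )$ with $\pi_1^*\in(0,1)$ and $\pi_2^*=1-\pi_1^*$. - The model is $p(\mathbf x\mid\theta)=\pi_1B(\mathbf x\mid\boldsymbol\mu_1)+\pi_2B(\mathbf x\mid\boldsymbol\mu_2)$. Notation: - $\overline{\mathbf x}=\mathbb E_{p^*}[\mathbf x]$ and $S_i=\overline x_i(1-\overline x_i)$. - $\boldsymbol\mu^*=(\boldsymbol\mu_1^*-\boldsymbol\mu_2^* )/2$. - With $\mathbf b=\boldsymbol\mu_1-\overline{\mathbf x}$, define the affine map $\boldsymbol\lambda(\boldsymbol\mu_1)$ by $\lambda_i=2S_i^{-1}\mu_i^*b_i$. - $Z_1(\boldsymbol\lambda)=\pi_1^*\prod_{i=1}^D(1+\pi_2^*\lambda_i)+\pi_2^*\prod_{i=1}^D(1-\pi_1^*\lambda_i)$.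 This equals $\int p^*(\mathbf x)B(\mathbf x\mid\boldsymbol\mu_1)/B(\mathbf x\mid\overline{\mathbf x})$, the leading-order (as $\pi_1\to0$) value of $Z_1=\mathbb E_{p^*}[B(\mathbf x\mid\boldsymbol\mu_1)/p(\mathbf x\mid\theta)]$ when $\boldsymbol\mu_2=\overline{\mathbf x}$. GD: - GD is projected gradient ascent on $\mathbb E_{p^*}[\log p(\mathbf x\mid\theta)]$ with step size $\alpha$, with the mixing coefficients Euclidean-projected onto the simplex. - In this regime it updates $(\pi_1,\pi_2)\leftarrow(\pi_1+\tfrac\alpha2(Z_1-1),\pi_2-\tfrac\alpha2(Z_1-1))$ and $\boldsymbol\mu_2\leftarrow\boldsymbol\mu_2+\alpha\Sigma_2^{-1}(\overline{\mathbf x}-\boldsymbol\mu_2)$. - $\boldsymbol\mu_1$ moves by an amount proportional to $\pi_1$. Attractive means that GD initialized near such a configuration (with $\pi_1$ small) converges to a configuration with $\pi_1=0$. Standing assumption: $\sigma_{ij}=4\pi_1^*\pi_2^*\mu_i^*\mu_j^*\neq0$ for all $i\neq j$. *)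

theory Defs
  imports "HOL-Analysis.Analysis"
begin

text \<open>Binary data points x in {0,1}^D are functions 'd => bool (x i = True means x_i = 1);
  the dimension D is CARD('d). Parameter vectors mu live in real^'d.\<close>

definition bit :: "bool \<Rightarrow> nat" where
  "bit b = (if b then 1 else 0)"

definition bern :: "('d::finite \<Rightarrow> bool) \<Rightarrow> real^'d \<Rightarrow> real" where
  "bern x mu = (\<Prod>i\<in>UNIV. (mu$i) ^ bit (x i) * (1 - mu$i) ^ (1 - bit (x i)))"

definition mix2 :: "real \<Rightarrow> real \<Rightarrow> real^'d \<Rightarrow> real^'d \<Rightarrow> ('d::finite \<Rightarrow> bool) \<Rightarrow> real" where
  "mix2 pi1 pi2 mu1 mu2 x = pi1 * bern x mu1 + pi2 * bern x mu2"

type_synonym 'd param = "real \<times> real \<times> (real^'d) \<times> (real^'d)"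

definition loglik :: "(('d::finite \<Rightarrow> bool) \<Rightarrow> real) \<Rightarrow> 'd param \<Rightarrow> real" where
  "loglik ps \<theta> = (case \<theta> of (pi1, pi2, mu1, mu2) \<Rightarrow>
      (\<Sum>x\<in>UNIV. ps x * ln (mix2 pi1 pi2 mu1 mu2 x)))"

definition grad :: "('a::real_inner \<Rightarrow> real) \<Rightarrow> 'a \<Rightarrow> 'a" where
  "grad f \<theta> = (THE D. GDERIV f \<theta> :> D)"

definition simplex2 :: "(real \<times> real) set" where
  "simplex2 = {(a, b). 0 \<le> a \<and> 0 \<le> b \<and> a + b = 1}"

definition gd_step :: "(('d::finite \<Rightarrow> bool) \<Rightarrow> real) \<Rightarrow> real \<Rightarrow> 'd param \<Rightarrow> 'd param" where
  "gd_step ps \<alpha> \<theta> = (case \<theta> + \<alpha> *\<^sub>R grad (loglik ps) \<theta> of (a, b, m1, m2) \<Rightarrow>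
      (case closest_point simplex2 (a, b) of (a', b') \<Rightarrow> (a', b', m1, m2)))"

definition xmean :: "(('d::finite \<Rightarrow> bool) \<Rightarrow> real) \<Rightarrow> real^'d" where
  "xmean ps = (\<Sum>x\<in>UNIV. ps x *\<^sub>R (\<chi> i. real (bit (x i))))"

definition lam :: "real^'d \<Rightarrow> real^'d \<Rightarrow> real^'d \<Rightarrow> real^'d::finite" where
  "lam xbar mustar mu1 =
     (\<chi> i. 2 * inverse (xbar$i * (1 - xbar$i)) * mustar$i * (mu1$i - xbar$i))"

definition Z1 :: "real \<Rightarrow> real \<Rightarrow> real^'d::finite \<Rightarrow> real" where
  "Z1 p1 p2 l = p1 * (\<Prod>i\<in>UNIV. 1 + p2 * l$i) + p2 * (\<Prod>i\<in>UNIV. 1 - p1 * l$i)"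

end

theory Submission
  imports Defs
begin

text \<open>
  Let theta* = (0, 1, mu1, xbar) be the one-cluster configuration. Near theta* a GD step moves
  pi1 by alpha/2 times the drift Z_1 - Z_2 (then clamped to [0, 1]), and at theta* itself
  Z_1 = Z1(lambda(mu1)) < 1 = Z_2. By continuity there is a ball around theta* on which the drift
  stays below some -eta, every step has length at most alpha M, and mu2 stays uniformly inside
  the open cube. Started close enough to theta*, pi1 therefore reaches 0 after about
  2 pi1 / (alpha eta) steps without the iterates leaving the ball. From then on mu1 is frozen
  and every coordinate of mu2 follows m := m + alpha (xbar - m) / (m (1 - m)), which contracts
  towards xbar by the factor 1 - 4 alpha once alpha is below the lower bound of m (1 - m).
\<close>

section \<open>Products of Bernoulli distributions\<close>

lemma sum_prod_bool_funs:
  fixes f :: "'d::finite \<Rightarrow> bool \<Rightarrow> 'a::comm_semiring_1"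
  shows "(\<Sum>x\<in>UNIV. \<Prod>i\<in>UNIV. f i (x i)) = (\<Prod>i\<in>UNIV. f i True + f i False)"
proof -
  have "(\<Prod>i\<in>UNIV. f i True + f i False) = (\<Prod>i\<in>UNIV. \<Sum>y\<in>UNIV. f i y)"
    by (simp add: UNIV_bool add.commute)
  also have "\<dots> = (\<Sum>g\<in>PiE UNIV (\<lambda>_. UNIV). \<Prod>i\<in>UNIV. f i (g i))"
    by (rule prod_sum_PiE) auto
  also have "PiE (UNIV::'d set) (\<lambda>_. UNIV::bool set) = UNIV"
    by auto
  finally show ?thesis
    by simp
qed

definition bern_factor :: "('d::finite \<Rightarrow> bool) \<Rightarrow> real^'d \<Rightarrow> 'd \<Rightarrow> real" where
  "bern_factor x m i = (if x i then m$i else 1 - m$i)"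

lemma bern_eq_prod_factor: "bern x m = (\<Prod>i\<in>UNIV. bern_factor x m i)"
  unfolding bern_def bern_factor_def by (intro prod.cong) (auto simp: bit_def)

lemma bern_pos: "(\<And>i. 0 < m$i \<and> m$i < 1) \<Longrightarrow> 0 < bern x m"
  unfolding bern_eq_prod_factor bern_factor_def by (intro prod_pos) auto

lemma sum_bern_mult_prod:
  "(\<Sum>x\<in>UNIV. bern x m * (\<Prod>i\<in>UNIV. c i (x i)))
     = (\<Prod>i\<in>UNIV. m$i * c i True + (1 - m$i) * c i False)"
proof -
  have "(\<Sum>x\<in>UNIV. bern x m * (\<Prod>i\<in>UNIV. c i (x i)))
      = (\<Sum>x\<in>UNIV. \<Prod>i\<in>UNIV. (if x i then m$i else 1 - m$i) * c i (x i))"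
    by (simp add: bern_eq_prod_factor bern_factor_def prod.distrib)
  also have "\<dots> = (\<Prod>i\<in>UNIV. m$i * c i True + (1 - m$i) * c i False)"
    by (subst sum_prod_bool_funs) simp
  finally show ?thesis .
qed

lemma sum_bern: "(\<Sum>x\<in>UNIV. bern x m) = 1"
  using sum_bern_mult_prod[of m "\<lambda>_ _. 1"] by simp

lemma sum_bern_mult_bit: "(\<Sum>x\<in>UNIV. bern x m * real (bit (x i))) = m$i"
proof -
  have "(\<Sum>x\<in>UNIV. bern x m * real (bit (x i)))
      = (\<Sum>x\<in>UNIV. bern x m * (\<Prod>j\<in>UNIV. if j = i then real (bit (x j)) else 1))"
    by (simp add: prod.delta)
  also have "\<dots> = (\<Prod>j\<in>UNIV. if j = i then m$i else 1)"
    by (subst sum_bern_mult_prod) (intro prod.cong, auto simp: bit_def)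
  finally show ?thesis
    by (simp add: prod.delta)
qed

lemma sum_mix2: "(\<Sum>x\<in>UNIV. mix2 p1 p2 m1 m2 x) = p1 + p2"
  by (simp add: mix2_def sum.distrib sum_bern flip: sum_distrib_left)

lemma xmean_mix2: "xmean (mix2 p1 p2 m1 m2) $ i = p1 * m1$i + p2 * m2$i"
proof -
  have "xmean (mix2 p1 p2 m1 m2) $ i = (\<Sum>x\<in>UNIV. mix2 p1 p2 m1 m2 x * real (bit (x i)))"
    by (simp add: xmean_def)
  also have "\<dots> = p1 * (\<Sum>x\<in>UNIV. bern x m1 * real (bit (x i)))
      + p2 * (\<Sum>x\<in>UNIV. bern x m2 * real (bit (x i)))"
    by (simp add: mix2_def sum.distrib sum_distrib_left algebra_simps)
  finally show ?thesis
    by (simp add: sum_bern_mult_bit)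
qed

definition bern_partial :: "('d::finite \<Rightarrow> bool) \<Rightarrow> real^'d \<Rightarrow> 'd \<Rightarrow> real" where
  "bern_partial x m i = (if x i then 1 else -1) * (\<Prod>j\<in>UNIV-{i}. bern_factor x m j)"

lemma bern_factor_has_derivative:
  "((\<lambda>m. bern_factor x m i) has_derivative (\<lambda>v. (if x i then 1 else -1) * v$i)) (at m)"
proof -
  have nth: "((\<lambda>m. m$i) has_derivative (\<lambda>v. v$i)) (at m)"
    by (rule bounded_linear_vec_nth[THEN bounded_linear.has_derivative, OF has_derivative_ident])
  show ?thesis
  proof (cases "x i")
    case False
    have "((\<lambda>m. 1 - m$i) has_derivative (\<lambda>v. 0 - v$i)) (at m)"
      by (intro has_derivative_diff has_derivative_const nth)
    with False show ?thesis
      unfolding bern_factor_def by simp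
  qed (use nth in \<open>simp add: bern_factor_def\<close>)
qed

lemma bern_has_derivative:
  "((\<lambda>m. bern x m) has_derivative (\<lambda>v. \<Sum>i\<in>UNIV. v$i * bern_partial x m i)) (at m)"
  unfolding bern_eq_prod_factor
  by (rule has_derivative_eq_rhs, rule has_derivative_prod, rule bern_factor_has_derivative)
    (simp add: bern_partial_def mult_ac)

lemma continuous_bern_factor [continuous_intros]:
  "continuous (at z) f \<Longrightarrow> continuous (at z) (\<lambda>\<theta>. bern_factor x (f \<theta>) i)"
  using continuous_at_compose[of z f "\<lambda>m. bern_factor x m i", unfolded o_def]
    has_derivative_continuous[OF bern_factor_has_derivative]
  by blast

lemma continuous_bern [continuous_intros]:
  "continuous (at z) f \<Longrightarrow> continuous (at z) (\<lambda>\<theta>. bern x (f \<theta>))"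
  unfolding bern_eq_prod_factor by (intro continuous_intros)

lemma continuous_bern_partial [continuous_intros]:
  "continuous (at z) f \<Longrightarrow> continuous (at z) (\<lambda>\<theta>. bern_partial x (f \<theta>) i)"
  unfolding bern_partial_def by (intro continuous_intros)

lemma bern_partial_div_bern:
  assumes "\<And>j. 0 < m$j \<and> m$j < 1"
  shows "bern_partial x m i / bern x m = (if x i then 1 / m$i else - 1 / (1 - m$i))"
proof -
  define P where "P = (\<Prod>j\<in>UNIV-{i}. bern_factor x m j)"
  have "bern x m = bern_factor x m i * P"
    unfolding bern_eq_prod_factor P_def by (simp add: prod.remove)
  moreover have "P > 0"
    unfolding P_def using assms by (intro prod_pos) (auto simp: bern_factor_def)
  ultimately have "bern_partial x m i / bern x m = (if x i then 1 else -1) / bern_factor x m i"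
    unfolding bern_partial_def by (simp flip: P_def)
  then show ?thesis
    by (simp add: bern_factor_def)
qed
section \<open>The projected gradient step\<close>

text \<open>\<open>lik_ratio ps a b m1 m2 mk\<close> is Z_k = E_ps[B(x | mk) / p(x | theta)].\<close>

definition lik_ratio :: "(('d::finite \<Rightarrow> bool) \<Rightarrow> real) \<Rightarrow> real \<Rightarrow> real \<Rightarrow> real^'d \<Rightarrow> real^'d
    \<Rightarrow> real^'d \<Rightarrow> real" where
  "lik_ratio ps a b m1 m2 m = (\<Sum>x\<in>UNIV. ps x * bern x m / mix2 a b m1 m2 x)"

definition lik_ratio_grad :: "(('d::finite \<Rightarrow> bool) \<Rightarrow> real) \<Rightarrow> real \<Rightarrow> real \<Rightarrow> real^'d \<Rightarrow> real^'d
    \<Rightarrow> real^'d \<Rightarrow> real^'d" where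
  "lik_ratio_grad ps a b m1 m2 m = (\<chi> i. \<Sum>x\<in>UNIV. ps x * bern_partial x m i / mix2 a b m1 m2 x)"

lemma has_gderiv_loglik:
  fixes m1 m2 :: "real^'d::finite"
  assumes pos: "\<And>x. 0 < mix2 a b m1 m2 x"
  shows "GDERIV (loglik ps) (a, b, m1, m2) :>
    (lik_ratio ps a b m1 m2 m1, lik_ratio ps a b m1 m2 m2,
     a *\<^sub>R lik_ratio_grad ps a b m1 m2 m1, b *\<^sub>R lik_ratio_grad ps a b m1 m2 m2)"
proof -
  let ?t = "(a, b, m1, m2) :: 'd param"
  have loglik_eq: "loglik ps = (\<lambda>\<theta>. \<Sum>x\<in>UNIV. ps x * ln (fst \<theta> * bern x (fst (snd (snd \<theta>)))
      + fst (snd \<theta>) * bern x (snd (snd (snd \<theta>)))))"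
    by (auto simp: fun_eq_iff loglik_def mix2_def split: prod.splits)
  have d1: "((\<lambda>\<theta>::'d param. bern x (fst (snd (snd \<theta>)))) has_derivative
     (\<lambda>h. \<Sum>i\<in>UNIV. (fst (snd (snd h)))$i * bern_partial x m1 i)) (at ?t)" for x
  proof -
    have "((\<lambda>\<theta>::'d param. fst (snd (snd \<theta>))) has_derivative (\<lambda>h. fst (snd (snd h)))) (at ?t)"
      by (intro derivative_intros)
    from has_derivative_compose[OF this bern_has_derivative] show ?thesis
      by simp
  qed
  have d2: "((\<lambda>\<theta>::'d param. bern x (snd (snd (snd \<theta>)))) has_derivative
     (\<lambda>h. \<Sum>i\<in>UNIV. (snd (snd (snd h)))$i * bern_partial x m2 i)) (at ?t)" for x
  proof -
    have "((\<lambda>\<theta>::'d param. snd (snd (snd \<theta>))) has_derivative (\<lambda>h. snd (snd (snd h)))) (at ?t)"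
      by (intro derivative_intros)
    from has_derivative_compose[OF this bern_has_derivative] show ?thesis
      by simp
  qed
  show ?thesis
    unfolding gderiv_def loglik_eq
    apply (rule has_derivative_eq_rhs)
     apply (rule has_derivative_sum has_derivative_mult_right has_derivative_ln)+
    using pos apply (simp add: mix2_def)
      apply (rule has_derivative_add)
       apply (rule has_derivative_mult[OF has_derivative_fst[OF has_derivative_ident] d1])
      apply (rule has_derivative_mult
          [OF has_derivative_fst[OF has_derivative_snd[OF has_derivative_ident]] d2])
    apply (rule ext)
    subgoal for h
      apply (cases h)
      apply (simp add: lik_ratio_def lik_ratio_grad_def inner_vec_def mix2_def sum_distrib_left
          sum_distrib_right sum_divide_distrib algebra_simps divide_inverse sum.distrib)
      apply (subst (1 2) sum.swap)
      apply (simp add: mult_ac)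
      done
    done
qed

lemma grad_eqI:
  assumes "GDERIV f x :> D"
  shows "grad f x = D"
  unfolding grad_def
proof (rule the_equality)
  fix D' assume "GDERIV f x :> D'"
  then have "(\<lambda>h. inner h D') = (\<lambda>h. inner h D)"
    using assms unfolding gderiv_def by (rule has_derivative_unique)
  then have "inner (D' - D) D' = inner (D' - D) D"
    by metis
  then have "inner (D' - D) (D' - D) = 0"
    by (simp add: inner_diff_right)
  then show "D' = D"
    by simp
qed (rule assms)

lemma convex_simplex2: "convex simplex2"
  unfolding convex_def simplex2_def
proof clarsimp
  fix a b c d u v :: real
  assume "a + b = 1" "c + d = 1" "u + v = 1"
  moreover have "u * a + v * c + (u * b + v * d) = u * (a + b) + v * (c + d)"
    by (simp add: algebra_simps)
  ultimately show "u * a + v * c + (u * b + v * d) = 1"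
    by simp
qed

lemma closed_simplex2: "closed simplex2"
proof -
  have "simplex2 = {p. 0 \<le> fst p} \<inter> {p. 0 \<le> snd p} \<inter> {p. fst p + snd p = 1}"
    unfolding simplex2_def by auto
  moreover have "closed {p::real\<times>real. 0 \<le> fst p}" "closed {p::real\<times>real. 0 \<le> snd p}"
      "closed {p::real\<times>real. fst p + snd p = 1}"
    by (intro closed_Collect_le closed_Collect_eq continuous_intros)+
  ultimately show ?thesis
    by (metis closed_Int)
qed

lemma closest_point_simplex2:
  "closest_point simplex2 (u, v)
     = (max 0 (min 1 ((u - v + 1) / 2)), 1 - max 0 (min 1 ((u - v + 1) / 2)))"
proof -
  define w where "w = (u - v + 1) / 2"
  define t where "t = max 0 (min 1 w)"
  have "(t, 1 - t) = closest_point simplex2 (u, v)"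
  proof (rule closest_point_unique[OF convex_simplex2 closed_simplex2])
    show "(t, 1 - t) \<in> simplex2"
      unfolding simplex2_def t_def by auto
    show "\<forall>z\<in>simplex2. dist (u, v) (t, 1 - t) \<le> dist (u, v) z"
    proof
      fix z assume "z \<in> simplex2"
      then obtain c d where "z = (c, d)" "0 \<le> c" "0 \<le> d" "c + d = 1"
        unfolding simplex2_def by auto
      then have z: "z = (c, 1 - c)" "0 \<le> c" "c \<le> 1"
        by auto
      have sq: "(u - s)^2 + (v - (1 - s))^2 = 2 * (s - w)^2 + ((u - w)^2 + (v - 1 + w)^2)" for s
        unfolding w_def by (simp add: power2_eq_square field_simps)
      have "\<bar>t - w\<bar> \<le> \<bar>c - w\<bar>"
        using z unfolding t_def by (auto simp: abs_if max_def min_def)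
      then have "(u - t)^2 + (v - (1 - t))^2 \<le> (u - c)^2 + (v - (1 - c))^2"
        unfolding sq by (simp add: abs_le_square_iff)
      then show "dist (u, v) (t, 1 - t) \<le> dist (u, v) z"
        unfolding z dist_Pair_Pair dist_real_def
        by (intro real_sqrt_le_mono) (simp add: power2_abs power2_commute)
    qed
  qed
  then show ?thesis
    unfolding t_def w_def by simp
qed

lemma gd_step_eq:
  fixes m1 m2 :: "real^'d::finite" and ps :: "('d \<Rightarrow> bool) \<Rightarrow> real" and \<alpha> :: real
  assumes "b = 1 - a" and "\<And>x. 0 < mix2 a b m1 m2 x"
  defines "a' \<equiv> max 0 (min 1 (a + \<alpha> * (lik_ratio ps a b m1 m2 m1 - lik_ratio ps a b m1 m2 m2) / 2))"
  shows "gd_step ps \<alpha> (a, b, m1, m2) =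
    (a', 1 - a', m1 + (\<alpha> * a) *\<^sub>R lik_ratio_grad ps a b m1 m2 m1,
     m2 + (\<alpha> * b) *\<^sub>R lik_ratio_grad ps a b m1 m2 m2)"
proof -
  have e: "(a + \<alpha> * lik_ratio ps a b m1 m2 m1 - (b + \<alpha> * lik_ratio ps a b m1 m2 m2) + 1) / 2
      = a + \<alpha> * (lik_ratio ps a b m1 m2 m1 - lik_ratio ps a b m1 m2 m2) / 2"
    using assms(1) by (simp add: field_simps)
  have "closest_point simplex2
      (a + \<alpha> * lik_ratio ps a b m1 m2 m1, b + \<alpha> * lik_ratio ps a b m1 m2 m2) = (a', 1 - a')"
    by (simp only: closest_point_simplex2 e a'_def)
  then show ?thesis
    unfolding gd_step_def grad_eqI[OF has_gderiv_loglik[OF assms(2)]] by simp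
qed

section \<open>The one-cluster configuration\<close>

text \<open>One coordinate of E[B(x | m) / B(x | X)] under B(x | a) and under B(x | c), where
  X = p1 a + p2 c; multiplying over the coordinates gives the two products in \<open>Z1\<close>.\<close>

lemma bern_coord_ratio_mean:
  fixes X a c m p1 p2 :: real
  assumes X: "X = p1 * a + p2 * c" and p2: "p2 = 1 - p1" and "0 < X" "X < 1"
  shows "a * (m / X) + (1 - a) * ((1 - m) / (1 - X))
           = 1 + p2 * (2 * inverse (X * (1 - X)) * ((a - c) / 2) * (m - X))"
    and "c * (m / X) + (1 - c) * ((1 - m) / (1 - X))
           = 1 - p1 * (2 * inverse (X * (1 - X)) * ((a - c) / 2) * (m - X))"
proof -
  have nz: "X \<noteq> 0" "1 - X \<noteq> 0"
    using assms by auto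
  have "a * (m / X) + (1 - a) * ((1 - m) / (1 - X))
           = (a * m * (1 - X) + (1 - a) * (1 - m) * X) / (X * (1 - X))"
    and "c * (m / X) + (1 - c) * ((1 - m) / (1 - X))
           = (c * m * (1 - X) + (1 - c) * (1 - m) * X) / (X * (1 - X))"
    and "1 + p2 * (2 * inverse (X * (1 - X)) * ((a - c) / 2) * (m - X))
           = (X * (1 - X) + p2 * (a - c) * (m - X)) / (X * (1 - X))"
    and "1 - p1 * (2 * inverse (X * (1 - X)) * ((a - c) / 2) * (m - X))
           = (X * (1 - X) - p1 * (a - c) * (m - X)) / (X * (1 - X))"
    using nz by (simp_all add: field_simps)
  moreover have "a * m * (1 - X) + (1 - a) * (1 - m) * X = X * (1 - X) + p2 * (a - c) * (m - X)"
    and "c * m * (1 - X) + (1 - c) * (1 - m) * X = X * (1 - X) - p1 * (a - c) * (m - X)"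
    unfolding X p2 by (simp_all add: algebra_simps)
  ultimately show "a * (m / X) + (1 - a) * ((1 - m) / (1 - X))
           = 1 + p2 * (2 * inverse (X * (1 - X)) * ((a - c) / 2) * (m - X))"
    and "c * (m / X) + (1 - c) * ((1 - m) / (1 - X))
           = 1 - p1 * (2 * inverse (X * (1 - X)) * ((a - c) / 2) * (m - X))"
    by simp_all
qed

locale one_cluster_setting =
  fixes pistar1 pistar2 :: real and mustar1 mustar2 mu1 :: "real^'d::finite"
  assumes pistar1_range: "0 < pistar1" "pistar1 < 1" and pistar2_eq: "pistar2 = 1 - pistar1"
    and mustar1_range: "\<And>i. 0 \<le> mustar1$i \<and> mustar1$i \<le> 1"
    and mustar2_range: "\<And>i. 0 \<le> mustar2$i \<and> mustar2$i \<le> 1"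
    and cross: "\<And>i j. i \<noteq> j \<Longrightarrow>
      4 * pistar1 * pistar2 * ((mustar1 - mustar2)/\<^sub>R 2)$i * ((mustar1 - mustar2)/\<^sub>R 2)$j \<noteq> 0"
    and Z1_lt_1: "Z1 pistar1 pistar2
      (lam (xmean (mix2 pistar1 pistar2 mustar1 mustar2)) ((mustar1 - mustar2)/\<^sub>R 2) mu1) < 1"
begin

abbreviation "pstar \<equiv> mix2 pistar1 pistar2 mustar1 mustar2"
abbreviation "mustar \<equiv> (mustar1 - mustar2) /\<^sub>R 2"
abbreviation "xbar \<equiv> xmean pstar"
abbreviation "one_cluster \<equiv> ((0::real), (1::real), mu1, xbar)"

lemma xbar_nth: "xbar$i = pistar1 * mustar1$i + pistar2 * mustar2$i"
  by (rule xmean_mix2)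

lemma sum_pstar: "(\<Sum>x\<in>UNIV. pstar x) = 1"
  by (simp add: sum_mix2 pistar2_eq)

lemma components_differ: "mustar1$i \<noteq> mustar2$i"
proof
  assume eq: "mustar1$i = mustar2$i"
  have "j = i" for j
    using cross[of j i] eq by (cases "j = i") auto
  then have U: "(UNIV::'d set) = {i}"
    by auto
  have "Z1 pistar1 pistar2 (lam xbar mustar mu1) = 1"
    unfolding Z1_def U using pistar2_eq by (simp add: algebra_simps)
  with Z1_lt_1 show False
    by simp
qed

lemma xbar_bounds: "0 < xbar$i" "xbar$i < 1"
proof -
  have e1: "xbar$i = mustar1$i + pistar2 * (mustar2$i - mustar1$i)"
    and e2: "xbar$i = mustar2$i + pistar1 * (mustar1$i - mustar2$i)"
    by (simp_all only: xbar_nth) (simp_all add: pistar2_eq algebra_simps)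
  have "0 < pistar2"
    using pistar1_range pistar2_eq by simp
  consider "mustar1$i < mustar2$i" | "mustar2$i < mustar1$i"
    using components_differ[of i] by linarith
  then have "0 < pistar2 * (mustar2$i - mustar1$i) \<and> pistar1 * (mustar1$i - mustar2$i) < 0
      \<or> pistar2 * (mustar2$i - mustar1$i) < 0 \<and> 0 < pistar1 * (mustar1$i - mustar2$i)"
    by cases (use pistar1_range \<open>0 < pistar2\<close> in \<open>simp_all add: mult_pos_neg\<close>)
  then show "0 < xbar$i" "xbar$i < 1"
    using e1 e2 mustar1_range[of i] mustar2_range[of i] by linarith+
qed

lemma bern_xbar_pos: "0 < bern x xbar"
  by (rule bern_pos) (simp add: xbar_bounds)

lemma lik_ratio_one_cluster_mu1:
  "lik_ratio pstar 0 1 mu1 xbar mu1 = Z1 pistar1 pistar2 (lam xbar mustar mu1)"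
proof -
  define c where "c i b = (if b then mu1$i else 1 - mu1$i) / (if b then xbar$i else 1 - xbar$i)"
    for i b
  have c: "bern x mu1 / bern x xbar = (\<Prod>i\<in>UNIV. c i (x i))" for x
    unfolding bern_eq_prod_factor bern_factor_def c_def by (simp add: prod_dividef)
  have "lik_ratio pstar 0 1 mu1 xbar mu1 = (\<Sum>x\<in>UNIV. pstar x * (bern x mu1 / bern x xbar))"
    unfolding lik_ratio_def by (simp add: mix2_def[of 0])
  also have "\<dots> = (\<Sum>x\<in>UNIV. pistar1 * (bern x mustar1 * (\<Prod>i\<in>UNIV. c i (x i)))
      + pistar2 * (bern x mustar2 * (\<Prod>i\<in>UNIV. c i (x i))))"
    unfolding c by (simp add: mix2_def[of pistar1] algebra_simps)
  also have "\<dots> = pistar1 * (\<Prod>i\<in>UNIV. mustar1$i * c i True + (1 - mustar1$i) * c i False)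
      + pistar2 * (\<Prod>i\<in>UNIV. mustar2$i * c i True + (1 - mustar2$i) * c i False)"
    by (simp add: sum.distrib sum_bern_mult_prod flip: sum_distrib_left)
  also have "\<dots> = Z1 pistar1 pistar2 (lam xbar mustar mu1)"
    unfolding Z1_def lam_def c_def
    using bern_coord_ratio_mean[OF xbar_nth pistar2_eq xbar_bounds] by simp
  finally show ?thesis .
qed

lemma lik_ratio_one_cluster_xbar: "lik_ratio pstar 0 1 mu1 xbar xbar = 1"
proof -
  have "lik_ratio pstar 0 1 mu1 xbar xbar = (\<Sum>x\<in>UNIV. pstar x)"
    unfolding lik_ratio_def mix2_def[of 0]
    using bern_xbar_pos by (intro sum.cong) (simp_all add: less_imp_neq[symmetric])
  then show ?thesis
    using sum_pstar by simp
qed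

lemma lik_ratio_grad_single_cluster:
  assumes m: "\<And>j. 0 < m$j \<and> m$j < 1"
  shows "lik_ratio_grad pstar 0 1 m1 m m $ i = (xbar$i - m$i) / (m$i * (1 - m$i))"
proof -
  let ?x1 = "\<Sum>x\<in>UNIV. pstar x * real (bit (x i))"
  have "lik_ratio_grad pstar 0 1 m1 m m $ i = (\<Sum>x\<in>UNIV. pstar x * (bern_partial x m i / bern x m))"
    unfolding lik_ratio_grad_def by (simp add: mix2_def[of 0])
  also have "\<dots> = (\<Sum>x\<in>UNIV. pstar x * real (bit (x i)) * (1 / m$i)
      - (pstar x - pstar x * real (bit (x i))) * (1 / (1 - m$i)))"
    unfolding bern_partial_div_bern[OF m] by (intro sum.cong) (auto simp: bit_def)
  also have "\<dots> = ?x1 * (1 / m$i) - ((\<Sum>x\<in>UNIV. pstar x) - ?x1) * (1 / (1 - m$i))"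
    by (simp only: sum_subtractf flip: sum_distrib_right)
  also have "?x1 = xbar$i"
    by (simp add: xmean_def)
  also have "xbar$i * (1 / m$i) - ((\<Sum>x\<in>UNIV. pstar x) - xbar$i) * (1 / (1 - m$i))
      = (xbar$i - m$i) / (m$i * (1 - m$i))"
    using m[of i] by (simp add: sum_pstar field_simps)
  finally show ?thesis .
qed

end

section \<open>Dynamics near the one-cluster configuration\<close>

text \<open>Before projection, GD moves the mixing weight pi1 by alpha / 2 times \<open>pi_drift\<close>.\<close>

definition pi_drift :: "(('d::finite \<Rightarrow> bool) \<Rightarrow> real) \<Rightarrow> 'd param \<Rightarrow> real" where
  "pi_drift ps \<theta> =
     (case \<theta> of (a, b, m1, m2) \<Rightarrow> lik_ratio ps a b m1 m2 m1 - lik_ratio ps a b m1 m2 m2)"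

definition gd_speed :: "(('d::finite \<Rightarrow> bool) \<Rightarrow> real) \<Rightarrow> 'd param \<Rightarrow> real" where
  "gd_speed ps \<theta> = (case \<theta> of (a, b, m1, m2) \<Rightarrow>
     \<bar>pi_drift ps \<theta>\<bar> + \<bar>a\<bar> * (\<Sum>i\<in>UNIV. \<bar>lik_ratio_grad ps a b m1 m2 m1 $ i\<bar>)
       + \<bar>b\<bar> * (\<Sum>i\<in>UNIV. \<bar>lik_ratio_grad ps a b m1 m2 m2 $ i\<bar>))"

lemma continuous_mix2_param:
  "continuous (at z) (\<lambda>\<theta>::'d::finite param. case \<theta> of (a, b, m1, m2) \<Rightarrow> mix2 a b m1 m2 x)"
  unfolding mix2_def split_beta by (intro continuous_intros)

lemma continuous_pi_drift:
  assumes "\<And>x. mix2 a b m1 m2 x \<noteq> 0"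
  shows "continuous (at (a, b, m1, m2)) (pi_drift ps)"
  unfolding pi_drift_def lik_ratio_def split_beta
  using assms unfolding mix2_def by (intro continuous_intros) auto

lemma continuous_gd_speed:
  assumes "\<And>x. mix2 a b m1 m2 x \<noteq> 0"
  shows "continuous (at (a, b, m1, m2)) (gd_speed ps)"
  unfolding gd_speed_def lik_ratio_grad_def vec_lambda_beta split_beta
  using assms continuous_pi_drift[OF assms] unfolding mix2_def by (intro continuous_intros) auto

lemma continuous_at_eventually_gt:
  "continuous (at z) g \<Longrightarrow> (c::real) < g z \<Longrightarrow> eventually (\<lambda>\<theta>. c < g \<theta>) (nhds z)"
  unfolding continuous_at tendsto_at_iff_tendsto_nhds by (rule order_tendstoD(1))

lemma continuous_at_eventually_lt:
  "continuous (at z) g \<Longrightarrow> g z < (c::real) \<Longrightarrow> eventually (\<lambda>\<theta>. g \<theta> < c) (nhds z)"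
  unfolding continuous_at tendsto_at_iff_tendsto_nhds by (rule order_tendstoD(2))

lemma norm_Pair4_le: "norm (w, x, y, z) \<le> \<bar>w\<bar> + \<bar>x\<bar> + norm y + norm z"
proof -
  have "norm (w, x, y, z) \<le> norm w + norm (x, y, z)"
    by (rule norm_Pair_le)
  also have "norm (x, y, z) \<le> norm x + norm (y, z)"
    by (rule norm_Pair_le)
  also have "norm (y, z) \<le> norm y + norm z"
    by (rule norm_Pair_le)
  finally show ?thesis
    by simp
qed

lemma gd_step_negative_drift:
  fixes m1 m2 :: "real^'d::finite"
  assumes pos: "\<And>x. 0 < mix2 a (1 - a) m1 m2 x"
    and drift: "pi_drift ps (a, 1 - a, m1, m2) < - \<eta>"
    and "0 < \<eta>" "0 < \<alpha>" "0 \<le> a" "a \<le> 1"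
  obtains a' where
    "gd_step ps \<alpha> (a, 1 - a, m1, m2) = (a', 1 - a',
        m1 + (\<alpha> * a) *\<^sub>R lik_ratio_grad ps a (1 - a) m1 m2 m1,
        m2 + (\<alpha> * (1 - a)) *\<^sub>R lik_ratio_grad ps a (1 - a) m1 m2 m2)"
    and "0 \<le> a'" and "a' \<le> max 0 (a - \<alpha> * \<eta> / 2)"
    and "dist (gd_step ps \<alpha> (a, 1 - a, m1, m2)) (a, 1 - a, m1, m2) \<le> \<alpha> * gd_speed ps (a, 1 - a, m1, m2)"
proof -
  let ?H1 = "lik_ratio_grad ps a (1 - a) m1 m2 m1" and ?H2 = "lik_ratio_grad ps a (1 - a) m1 m2 m2"
  define d where "d = pi_drift ps (a, 1 - a, m1, m2)"
  define a' where "a' = max 0 (a + \<alpha> * d / 2)"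
  have "\<alpha> * d < \<alpha> * (- \<eta>)"
    using drift \<open>0 < \<alpha>\<close> unfolding d_def by (intro mult_strict_left_mono) auto
  then have lt: "\<alpha> * d / 2 < - (\<alpha> * \<eta> / 2)"
    by simp
  moreover have "0 < \<alpha> * \<eta>"
    using \<open>0 < \<alpha>\<close> \<open>0 < \<eta>\<close> by simp
  ultimately have neg: "\<alpha> * d < 0"
    by linarith
  have step: "gd_step ps \<alpha> (a, 1 - a, m1, m2)
      = (a', 1 - a', m1 + (\<alpha> * a) *\<^sub>R ?H1, m2 + (\<alpha> * (1 - a)) *\<^sub>R ?H2)"
    using gd_step_eq[OF refl pos, where ps = ps and \<alpha> = \<alpha>] neg \<open>a \<le> 1\<close>
    unfolding a'_def d_def pi_drift_def by simp
  have "dist (gd_step ps \<alpha> (a, 1 - a, m1, m2)) (a, 1 - a, m1, m2)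
      = norm (a' - a, a - a', (\<alpha> * a) *\<^sub>R ?H1, (\<alpha> * (1 - a)) *\<^sub>R ?H2)"
    unfolding step dist_norm by simp
  also have "\<dots> \<le> \<bar>a' - a\<bar> + \<bar>a - a'\<bar> + norm ((\<alpha> * a) *\<^sub>R ?H1) + norm ((\<alpha> * (1 - a)) *\<^sub>R ?H2)"
    by (rule norm_Pair4_le)
  also have "\<dots> \<le> \<alpha> * \<bar>d\<bar> + \<alpha> * (\<bar>a\<bar> * (\<Sum>i\<in>UNIV. \<bar>?H1 $ i\<bar>))
      + \<alpha> * (\<bar>1 - a\<bar> * (\<Sum>i\<in>UNIV. \<bar>?H2 $ i\<bar>))"
  proof -
    have "\<bar>a' - a\<bar> \<le> \<alpha> * \<bar>d\<bar> / 2"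
      unfolding a'_def using \<open>0 \<le> a\<close> neg \<open>0 < \<alpha>\<close> by (auto simp: abs_if max_def)
    moreover have l1: "norm ((\<alpha> * e) *\<^sub>R H) \<le> \<alpha> * (\<bar>e\<bar> * (\<Sum>i\<in>UNIV. \<bar>H $ i\<bar>))"
      for e and H :: "real^'d"
      using norm_le_l1_cart[of H] \<open>0 < \<alpha>\<close> by (simp add: abs_mult mult.assoc mult_left_mono)
    ultimately show ?thesis
      using l1[of a ?H1] l1[of "1 - a" ?H2] abs_minus_commute[of a a'] by linarith
  qed
  also have "\<dots> = \<alpha> * gd_speed ps (a, 1 - a, m1, m2)"
    unfolding gd_speed_def d_def by (simp add: algebra_simps)
  finally show ?thesis
    using that[OF step] lt unfolding a'_def by simp
qed

lemma mult_one_minus_le_quarter: "(m::real) * (1 - m) \<le> 1 / 4"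
  using sum_squares_ge_zero[of "m - 1/2" 0] by (simp add: power2_eq_square algebra_simps)

lemma mean_step_contraction:
  fixes m c \<alpha> :: real
  assumes "0 < \<alpha>" and "\<alpha> \<le> m * (1 - m)"
  shows "\<bar>m + \<alpha> * ((c - m) / (m * (1 - m))) - c\<bar> \<le> (1 - 4 * \<alpha>) * \<bar>m - c\<bar>"
proof -
  define Q where "Q = m * (1 - m)"
  have Q: "0 < Q" "\<alpha> \<le> Q" "Q \<le> 1 / 4"
    using assms mult_one_minus_le_quarter[of m] unfolding Q_def by auto
  have eq: "m + \<alpha> * ((c - m) / Q) - c = (m - c) * (1 - \<alpha> / Q)"
    using Q by (simp add: field_simps)
  have "0 \<le> 1 - \<alpha> / Q"
    using Q by simp
  then have "\<bar>m + \<alpha> * ((c - m) / Q) - c\<bar> = \<bar>m - c\<bar> * (1 - \<alpha> / Q)"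
    unfolding eq abs_mult by simp
  also have "\<dots> \<le> \<bar>m - c\<bar> * (1 - 4 * \<alpha>)"
    using Q assms(1) by (intro mult_left_mono) (simp_all add: field_simps mult_left_le)
  finally show ?thesis
    unfolding Q_def by (simp add: mult.commute)
qed

lemma dist_Pair_mono_right:
  assumes "dist y z \<le> dist y' z"
  shows "dist (x, y) (x', z) \<le> dist (x, y') (x', z)"
  unfolding dist_Pair_Pair using assms
  by (intro real_sqrt_le_mono add_left_mono power_mono) auto

lemma (in one_cluster_setting) pi_drift_one_cluster:
  "pi_drift pstar one_cluster = Z1 pistar1 pistar2 (lam xbar mustar mu1) - 1"
  unfolding pi_drift_def by (simp add: lik_ratio_one_cluster_mu1 lik_ratio_one_cluster_xbar)

lemma (in one_cluster_setting) xbar_variance_bounded_below: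
  "\<exists>s0>0. \<forall>i. s0 < xbar$i * (1 - xbar$i)"
proof -
  define v where "v = Min (range (\<lambda>i. xbar$i * (1 - xbar$i)))"
  have "0 < v"
    using xbar_bounds unfolding v_def by (auto simp: Min_gr_iff)
  have v_le: "v \<le> xbar$i * (1 - xbar$i)" for i
    unfolding v_def by (intro Min_le) auto
  have "v / 2 < xbar$i * (1 - xbar$i)" for i
    using \<open>0 < v\<close> v_le[of i] by linarith
  with \<open>0 < v\<close> show ?thesis
    by (intro exI[of _ "v / 2"]) auto
qed

locale one_cluster_ball = one_cluster_setting +
  fixes r \<eta> M s0 :: real
  assumes r_pos: "0 < r" and \<eta>_pos: "0 < \<eta>" and M_pos: "0 < M" and s0_pos: "0 < s0"
    and ball_mix_pos: "dist (a, b, m1, m2) one_cluster < r \<Longrightarrow> 0 < mix2 a b m1 m2 x"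
    and ball_drift: "dist (a, b, m1, m2) one_cluster < r \<Longrightarrow> pi_drift pstar (a, b, m1, m2) < - \<eta>"
    and ball_speed: "dist (a, b, m1, m2) one_cluster < r \<Longrightarrow> gd_speed pstar (a, b, m1, m2) \<le> M"
    and ball_mu2: "dist (a, b, m1, m2) one_cluster < r \<Longrightarrow>
                     0 < m2$i \<and> m2$i < 1 \<and> s0 \<le> m2$i * (1 - m2$i)"

lemma (in one_cluster_setting) one_cluster_ball_exists:
  "\<exists>r \<eta> M s0. one_cluster_ball pistar1 pistar2 mustar1 mustar2 mu1 r \<eta> M s0"
proof -
  obtain s0 where "0 < s0" and s0_lt: "\<And>i. s0 < xbar$i * (1 - xbar$i)"
    using xbar_variance_bounded_below by blast
  define \<eta> where "\<eta> = (1 - Z1 pistar1 pistar2 (lam xbar mustar mu1)) / 2"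
  define M where "M = gd_speed pstar one_cluster + 1"
  have "0 < \<eta>"
    using Z1_lt_1 unfolding \<eta>_def by simp
  have drift_base: "pi_drift pstar one_cluster < - \<eta>"
    using Z1_lt_1 unfolding pi_drift_one_cluster \<eta>_def by (simp add: field_simps)
  have mix_base: "mix2 0 1 mu1 xbar x = bern x xbar" for x
    by (simp add: mix2_def)
  have mix_base_nz: "mix2 0 1 mu1 xbar x \<noteq> 0" for x
    using bern_xbar_pos[of x] by (simp add: mix_base)
  have "eventually (\<lambda>\<theta>. (\<forall>x. 0 < (case \<theta> of (a, b, m1, m2) \<Rightarrow> mix2 a b m1 m2 x))
      \<and> pi_drift pstar \<theta> < - \<eta> \<and> gd_speed pstar \<theta> < M
      \<and> (\<forall>i. 0 < snd (snd (snd \<theta>)) $ i \<and> snd (snd (snd \<theta>)) $ i < 1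
             \<and> s0 < snd (snd (snd \<theta>)) $ i * (1 - snd (snd (snd \<theta>)) $ i))) (nhds one_cluster)"
    using xbar_bounds s0_lt
    by (intro eventually_conj eventually_all_finite allI continuous_at_eventually_gt
        continuous_at_eventually_lt continuous_mix2_param continuous_pi_drift continuous_gd_speed
        drift_base mix_base_nz continuous_intros)
      (auto simp: mix_base bern_xbar_pos M_def)
  then obtain r where "0 < r" and r: "\<And>\<theta>. dist \<theta> one_cluster < r \<Longrightarrow>
      (\<forall>x. 0 < (case \<theta> of (a, b, m1, m2) \<Rightarrow> mix2 a b m1 m2 x))
      \<and> pi_drift pstar \<theta> < - \<eta> \<and> gd_speed pstar \<theta> < M
      \<and> (\<forall>i. 0 < snd (snd (snd \<theta>)) $ i \<and> snd (snd (snd \<theta>)) $ i < 1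
             \<and> s0 < snd (snd (snd \<theta>)) $ i * (1 - snd (snd (snd \<theta>)) $ i))"
    unfolding eventually_nhds_metric by blast
  have "0 < M"
    unfolding M_def gd_speed_def by (simp add: sum_nonneg add_nonneg_pos)
  with \<open>0 < r\<close> \<open>0 < \<eta>\<close> \<open>0 < s0\<close> r[of "(_, _, _, _)"]
  have "one_cluster_ball pistar1 pistar2 mustar1 mustar2 mu1 r \<eta> M s0"
    by unfold_locales (fastforce simp: less_imp_le)+
  then show ?thesis
    by blast
qed

lemma le_max_zero_diff_trans:
  fixes x y z h k :: real
  assumes "x \<le> max 0 (y - h)" and "y \<le> max 0 (z - k)" and "0 \<le> h"
  shows "x \<le> max 0 (z - (k + h))"
  using assms by (auto simp: max_def split: if_splits)

context one_cluster_ball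
begin

lemma s0_le_quarter: "s0 \<le> 1 / 4"
  using ball_mu2[of 0 1 mu1 xbar i] r_pos mult_one_minus_le_quarter[of "xbar$i"] by auto

lemma step_in_ball:
  assumes ball: "dist (a, 1 - a, m1, m2) one_cluster < r" and "0 \<le> a" "a \<le> 1" "0 < \<alpha>"
  obtains a' m1' m2' where "gd_step pstar \<alpha> (a, 1 - a, m1, m2) = (a', 1 - a', m1', m2')"
    and "0 \<le> a'" and "a' \<le> max 0 (a - \<alpha> * \<eta> / 2)"
    and "dist (gd_step pstar \<alpha> (a, 1 - a, m1, m2)) (a, 1 - a, m1, m2) \<le> \<alpha> * M"
proof -
  have "\<alpha> * gd_speed pstar (a, 1 - a, m1, m2) \<le> \<alpha> * M"
    using ball_speed[OF ball] \<open>0 < \<alpha>\<close> by simp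
  with gd_step_negative_drift[OF ball_mix_pos[OF ball] ball_drift[OF ball] \<eta>_pos assms(4,2,3)]
  show ?thesis
    using that by fastforce
qed

lemma step_single_cluster:
  assumes ball: "dist (0, 1, m1, m2) one_cluster < r" and "0 < \<alpha>" "\<alpha> \<le> s0"
  shows "\<exists>m2'. gd_step pstar \<alpha> (0, 1, m1, m2) = (0, 1, m1, m2')
           \<and> (\<forall>i. \<bar>m2'$i - xbar$i\<bar> \<le> (1 - 4 * \<alpha>) * \<bar>m2$i - xbar$i\<bar>)"
proof -
  have ball': "dist (0, 1 - 0, m1, m2) one_cluster < r"
    using ball by simp
  obtain a' where step: "gd_step pstar \<alpha> (0, 1, m1, m2)
      = (a', 1 - a', m1, m2 + \<alpha> *\<^sub>R lik_ratio_grad pstar 0 1 m1 m2 m2)"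
    and "0 \<le> a'" "a' \<le> max 0 (0 - \<alpha> * \<eta> / 2)"
    using gd_step_negative_drift[OF ball_mix_pos[OF ball'] ball_drift[OF ball'] \<eta>_pos \<open>0 < \<alpha>\<close>]
    by auto
  then have "a' = 0"
    using \<eta>_pos \<open>0 < \<alpha>\<close> by simp
  moreover have "\<bar>(m2 + \<alpha> *\<^sub>R lik_ratio_grad pstar 0 1 m1 m2 m2) $ i - xbar$i\<bar>
      \<le> (1 - 4 * \<alpha>) * \<bar>m2$i - xbar$i\<bar>" for i
  proof -
    have "(m2 + \<alpha> *\<^sub>R lik_ratio_grad pstar 0 1 m1 m2 m2) $ i
        = m2$i + \<alpha> * ((xbar$i - m2$i) / (m2$i * (1 - m2$i)))"
      using ball_mu2[OF ball] by (simp add: lik_ratio_grad_single_cluster)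
    moreover have "\<alpha> \<le> m2$i * (1 - m2$i)"
      using ball_mu2[OF ball, of i] \<open>\<alpha> \<le> s0\<close> by linarith
    ultimately show ?thesis
      using mean_step_contraction[OF \<open>0 < \<alpha>\<close>] by simp
  qed
  ultimately show ?thesis
    using step by simp
qed

lemma iterates_single_cluster:
  assumes ball: "dist (0, 1, m1, m2) one_cluster < r" and "0 < \<alpha>" "\<alpha> \<le> s0"
  shows "\<exists>m. (gd_step pstar \<alpha> ^^ k) (0, 1, m1, m2) = (0, 1, m1, m)
           \<and> (\<forall>i. \<bar>m$i - xbar$i\<bar> \<le> (1 - 4 * \<alpha>) ^ k * \<bar>m2$i - xbar$i\<bar>)"
proof (induction k)
  case (Suc k)
  have q: "0 \<le> 1 - 4 * \<alpha>" "1 - 4 * \<alpha> \<le> 1"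
    using \<open>0 < \<alpha>\<close> \<open>\<alpha> \<le> s0\<close> s0_le_quarter by auto
  obtain m where m: "(gd_step pstar \<alpha> ^^ k) (0, 1, m1, m2) = (0, 1, m1, m)"
    and close: "\<And>i. \<bar>m$i - xbar$i\<bar> \<le> (1 - 4 * \<alpha>) ^ k * \<bar>m2$i - xbar$i\<bar>"
    using Suc.IH by blast
  have "\<bar>m$i - xbar$i\<bar> \<le> \<bar>m2$i - xbar$i\<bar>" for i
    using close[of i] q mult_left_le_one_le[of "\<bar>m2$i - xbar$i\<bar>" "(1 - 4 * \<alpha>) ^ k"]
    by (simp add: power_le_one)
  then have "dist m xbar \<le> dist m2 xbar"
    unfolding dist_norm by (intro norm_le_componentwise_cart) simp
  then have "dist (0, 1, m1, m) one_cluster \<le> dist (0, 1, m1, m2) one_cluster"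
    by (intro dist_Pair_mono_right)
  with ball have "dist (0, 1, m1, m) one_cluster < r"
    by linarith
  then obtain m' where step: "gd_step pstar \<alpha> (0, 1, m1, m) = (0, 1, m1, m')"
    and contr: "\<forall>i. \<bar>m'$i - xbar$i\<bar> \<le> (1 - 4 * \<alpha>) * \<bar>m$i - xbar$i\<bar>"
    using step_single_cluster[OF _ \<open>0 < \<alpha>\<close> \<open>\<alpha> \<le> s0\<close>] by blast
  have "\<bar>m'$i - xbar$i\<bar> \<le> (1 - 4 * \<alpha>) ^ Suc k * \<bar>m2$i - xbar$i\<bar>" for i
    using contr[rule_format, of i] mult_left_mono[OF close[of i] q(1)] by (simp add: mult.assoc)
  moreover have "(gd_step pstar \<alpha> ^^ Suc k) (0, 1, m1, m2) = (0, 1, m1, m')"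
    using m step by simp
  ultimately show ?case
    by blast
qed simp

lemma converges_from_single_cluster:
  assumes ball: "dist (0, 1, m1, m2) one_cluster < r" and "0 < \<alpha>" "\<alpha> < s0"
  shows "(\<lambda>k. (gd_step pstar \<alpha> ^^ k) (0, 1, m1, m2)) \<longlonglongrightarrow> (0, 1, m1, xbar)"
proof -
  define q where "q = 1 - 4 * \<alpha>"
  have q: "0 \<le> q" "q < 1"
    using \<open>0 < \<alpha>\<close> \<open>\<alpha> < s0\<close> s0_le_quarter unfolding q_def by auto
  define m where "m k = snd (snd (snd ((gd_step pstar \<alpha> ^^ k) (0, 1, m1, m2))))" for k
  have m: "(gd_step pstar \<alpha> ^^ k) (0, 1, m1, m2) = (0, 1, m1, m k)"
    and close: "\<forall>i. \<bar>m k $ i - xbar$i\<bar> \<le> q ^ k * \<bar>m2$i - xbar$i\<bar>" for k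
    using iterates_single_cluster[OF ball \<open>0 < \<alpha>\<close> less_imp_le[OF \<open>\<alpha> < s0\<close>], of k]
    unfolding m_def q_def by auto
  have "(\<lambda>k. m k - xbar) \<longlonglongrightarrow> 0"
  proof (rule Lim_null_comparison)
    show "\<forall>\<^sub>F k in sequentially. norm (m k - xbar) \<le> q ^ k * norm (m2 - xbar)"
    proof (intro always_eventually allI)
      fix k
      have "norm (m k - xbar) \<le> norm (q ^ k *\<^sub>R (m2 - xbar))"
        using close[of k] q by (intro norm_le_componentwise_cart) (simp add: abs_mult)
      then show "norm (m k - xbar) \<le> q ^ k * norm (m2 - xbar)"
        using q by simp
    qed
    show "(\<lambda>k. q ^ k * norm (m2 - xbar)) \<longlonglongrightarrow> 0"
      using tendsto_mult[OF LIMSEQ_power_zero[of q] tendsto_const[of "norm (m2 - xbar)"]] q by simp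
  qed
  then have "m \<longlonglongrightarrow> xbar"
    by (simp add: Lim_null[symmetric])
  then show ?thesis
    unfolding m by (intro tendsto_Pair tendsto_const)
qed

lemma iterates_lose_weight:
  assumes "0 < \<alpha>" and "0 \<le> a0" "a0 \<le> 1"
    and budget: "\<And>n. n \<le> N \<Longrightarrow> real n * \<alpha> * M + dist (a0, 1 - a0, m1, m2) one_cluster < r"
    and "n \<le> N"
  shows "\<exists>a m1' m2'. (gd_step pstar \<alpha> ^^ n) (a0, 1 - a0, m1, m2) = (a, 1 - a, m1', m2')
           \<and> 0 \<le> a \<and> a \<le> max 0 (a0 - real n * \<alpha> * \<eta> / 2)
           \<and> dist ((gd_step pstar \<alpha> ^^ n) (a0, 1 - a0, m1, m2)) (a0, 1 - a0, m1, m2) \<le> real n * \<alpha> * M"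
  using \<open>n \<le> N\<close>
proof (induction n)
  case (Suc n)
  let ?\<theta>0 = "(a0, 1 - a0, m1, m2)"
  obtain a m1' m2' where it: "(gd_step pstar \<alpha> ^^ n) ?\<theta>0 = (a, 1 - a, m1', m2')"
    and a: "0 \<le> a" "a \<le> max 0 (a0 - real n * \<alpha> * \<eta> / 2)"
    and moved_n: "dist ((gd_step pstar \<alpha> ^^ n) ?\<theta>0) ?\<theta>0 \<le> real n * \<alpha> * M"
    using Suc.IH[OF Suc_leD[OF Suc.prems]] by blast
  note moved = moved_n[unfolded it]
  have "0 \<le> real n * \<alpha> * \<eta> / 2"
    using \<open>0 < \<alpha>\<close> \<eta>_pos by simp
  then have "a \<le> 1"
    using a(2) \<open>a0 \<le> 1\<close> by (auto simp: max_def split: if_splits)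
  have "dist (a, 1 - a, m1', m2') one_cluster < r"
    using dist_triangle[of "(a, 1 - a, m1', m2')" one_cluster ?\<theta>0] moved
      budget[OF Suc_leD[OF Suc.prems]] by linarith
  then obtain a' m1'' m2'' where step: "gd_step pstar \<alpha> (a, 1 - a, m1', m2') = (a', 1 - a', m1'', m2'')"
    and "0 \<le> a'" and a': "a' \<le> max 0 (a - \<alpha> * \<eta> / 2)"
    and moved_step: "dist (gd_step pstar \<alpha> (a, 1 - a, m1', m2')) (a, 1 - a, m1', m2') \<le> \<alpha> * M"
    by (rule step_in_ball[OF _ a(1) \<open>a \<le> 1\<close> \<open>0 < \<alpha>\<close>])
  have "real n * \<alpha> * \<eta> / 2 + \<alpha> * \<eta> / 2 = real (Suc n) * \<alpha> * \<eta> / 2"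
    by (simp add: algebra_simps)
  then have weight: "a' \<le> max 0 (a0 - real (Suc n) * \<alpha> * \<eta> / 2)"
    using le_max_zero_diff_trans[OF a' a(2)] \<open>0 < \<alpha>\<close> \<eta>_pos by simp
  have it': "(gd_step pstar \<alpha> ^^ Suc n) ?\<theta>0 = (a', 1 - a', m1'', m2'')"
    using it step by simp
  have "real (Suc n) * \<alpha> * M = real n * \<alpha> * M + \<alpha> * M"
    by (simp add: algebra_simps)
  then have "dist ((gd_step pstar \<alpha> ^^ Suc n) ?\<theta>0) ?\<theta>0 \<le> real (Suc n) * \<alpha> * M"
    using dist_triangle[of "(a', 1 - a', m1'', m2'')" ?\<theta>0 "(a, 1 - a, m1', m2')"] moved
      moved_step[unfolded step] unfolding it' by linarith
  with it' \<open>0 \<le> a'\<close> weight show ?case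
    by blast
next
  case 0
  show ?case
    by (rule exI[of _ a0], rule exI[of _ m1], rule exI[of _ m2]) (simp add: \<open>0 \<le> a0\<close>)
qed

lemma reaches_single_cluster:
  assumes "0 < \<alpha>" and "\<alpha> * M < r / 4"
  shows "\<exists>\<delta>>0. \<forall>\<theta>0. (fst \<theta>0, fst (snd \<theta>0)) \<in> simplex2 \<and> dist \<theta>0 one_cluster < \<delta> \<longrightarrow>
           (\<exists>N m1 m2. (gd_step pstar \<alpha> ^^ N) \<theta>0 = (0, 1, m1, m2) \<and> dist (0, 1, m1, m2) one_cluster < r)"
    (is "\<exists>\<delta>>0. \<forall>\<theta>0. _ \<longrightarrow> ?reach \<theta>0")
proof -
  define \<delta> where "\<delta> = r * \<eta> / (4 * (\<eta> + 2 * M))"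
  have "0 < \<delta>"
    using r_pos \<eta>_pos M_pos unfolding \<delta>_def by simp
  have "\<delta> * (\<eta> + 2 * M) = r * \<eta> / 4"
    using \<eta>_pos M_pos unfolding \<delta>_def by (simp add: field_simps)
  moreover have "\<delta> + 2 * \<delta> * M / \<eta> = \<delta> * (\<eta> + 2 * M) / \<eta>"
    using \<eta>_pos by (simp add: field_simps)
  ultimately have \<delta>_eq: "\<delta> + 2 * \<delta> * M / \<eta> = r / 4"
    using \<eta>_pos by simp
  show ?thesis
  proof (rule exI[of _ \<delta>], intro conjI allI impI)
    show "0 < \<delta>"
      by (fact \<open>0 < \<delta>\<close>)
    fix \<theta>0
    assume "(fst \<theta>0, fst (snd \<theta>0)) \<in> simplex2 \<and> dist \<theta>0 one_cluster < \<delta>"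
    then have simplex: "(fst \<theta>0, fst (snd \<theta>0)) \<in> simplex2" and near: "dist \<theta>0 one_cluster < \<delta>"
      by simp_all
    obtain a0 b0 m1 m2 where "\<theta>0 = (a0, b0, m1, m2)"
      by (cases \<theta>0) blast
    with simplex have \<theta>0: "\<theta>0 = (a0, 1 - a0, m1, m2)" and "0 \<le> a0" "a0 \<le> 1"
      unfolding simplex2_def by auto
    have "a0 < \<delta>"
      using dist_fst_le[of \<theta>0 one_cluster] near \<theta>0 \<open>0 \<le> a0\<close> by (simp add: dist_real_def)
    define N where "N = nat \<lceil>2 * a0 / (\<alpha> * \<eta>)\<rceil>"
    have "0 \<le> 2 * a0 / (\<alpha> * \<eta>)"
      using \<open>0 < \<alpha>\<close> \<eta>_pos \<open>0 \<le> a0\<close> by simp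
    then have N_ge: "2 * a0 / (\<alpha> * \<eta>) \<le> real N" and N_le: "real N \<le> 2 * a0 / (\<alpha> * \<eta>) + 1"
      unfolding N_def by linarith+
    have "real N * (\<alpha> * M) \<le> (2 * a0 / (\<alpha> * \<eta>) + 1) * (\<alpha> * M)"
      using N_le \<open>0 < \<alpha>\<close> M_pos by (intro mult_right_mono) auto
    also have "\<dots> = 2 * a0 * M / \<eta> + \<alpha> * M"
      using \<open>0 < \<alpha>\<close> \<eta>_pos by (simp add: field_simps)
    also have "\<dots> \<le> 2 * \<delta> * M / \<eta> + \<alpha> * M"
      using \<open>a0 < \<delta>\<close> \<eta>_pos M_pos by (simp add: divide_right_mono)
    finally have N_steps: "real N * (\<alpha> * M) \<le> 2 * \<delta> * M / \<eta> + \<alpha> * M" .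
    have budget: "real n * \<alpha> * M + dist \<theta>0 one_cluster < r" if "n \<le> N" for n
    proof -
      have "real n * (\<alpha> * M) \<le> real N * (\<alpha> * M)"
        using that \<open>0 < \<alpha>\<close> M_pos by (intro mult_right_mono) auto
      then have "real n * \<alpha> * M + dist \<theta>0 one_cluster < (2 * \<delta> * M / \<eta> + \<alpha> * M) + \<delta>"
        using N_steps near by (intro add_le_less_mono) (simp_all add: mult.assoc)
      also have "\<dots> = r / 4 + \<alpha> * M"
        by (simp add: \<delta>_eq[symmetric] algebra_simps)
      also have "\<dots> < r"
        using assms(2) r_pos by linarith
      finally show ?thesis .
    qed
    have "\<exists>a m1' m2'. (gd_step pstar \<alpha> ^^ N) \<theta>0 = (a, 1 - a, m1', m2')
        \<and> 0 \<le> a \<and> a \<le> max 0 (a0 - real N * \<alpha> * \<eta> / 2)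
        \<and> dist ((gd_step pstar \<alpha> ^^ N) \<theta>0) \<theta>0 \<le> real N * \<alpha> * M"
      unfolding \<theta>0
      by (rule iterates_lose_weight[OF \<open>0 < \<alpha>\<close> \<open>0 \<le> a0\<close> \<open>a0 \<le> 1\<close> budget[unfolded \<theta>0] order_refl])
    then obtain a m1' m2' where TN: "(gd_step pstar \<alpha> ^^ N) \<theta>0 = (a, 1 - a, m1', m2')"
      and "0 \<le> a" "a \<le> max 0 (a0 - real N * \<alpha> * \<eta> / 2)"
      and moved: "dist ((gd_step pstar \<alpha> ^^ N) \<theta>0) \<theta>0 \<le> real N * \<alpha> * M"
      by blast
    have "a0 \<le> real N * \<alpha> * \<eta> / 2"
      using N_ge \<open>0 < \<alpha>\<close> \<eta>_pos by (simp add: field_simps)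
    with \<open>0 \<le> a\<close> \<open>a \<le> max 0 (a0 - real N * \<alpha> * \<eta> / 2)\<close> have "a = 0"
      by simp
    with TN have TN0: "(gd_step pstar \<alpha> ^^ N) \<theta>0 = (0, 1, m1', m2')"
      by simp
    have dist_N: "dist ((gd_step pstar \<alpha> ^^ N) \<theta>0) one_cluster < r"
      using dist_triangle[of "(gd_step pstar \<alpha> ^^ N) \<theta>0" one_cluster \<theta>0] moved budget[OF order_refl]
      by linarith
    moreover have "dist (0, 1, m1', m2') one_cluster < r"
      using dist_N by (simp only: TN0)
    ultimately show "?reach \<theta>0"
      using TN0 by blast
  qed
qed

lemma attracted:
  assumes "0 < \<alpha>" and "\<alpha> < s0" and "\<alpha> * M < r / 4"
  shows "\<exists>\<delta>>0. \<forall>\<theta>0. (fst \<theta>0, fst (snd \<theta>0)) \<in> simplex2 \<and> dist \<theta>0 one_cluster < \<delta> \<longrightarrow>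
           (\<exists>\<theta>lim. (\<lambda>n. (gd_step pstar \<alpha> ^^ n) \<theta>0) \<longlonglongrightarrow> \<theta>lim \<and> fst \<theta>lim = 0)"
    (is "\<exists>\<delta>>0. \<forall>\<theta>0. _ \<longrightarrow> ?converges \<theta>0")
proof -
  obtain \<delta> where "0 < \<delta>" and reach: "\<forall>\<theta>0. (fst \<theta>0, fst (snd \<theta>0)) \<in> simplex2 \<and> dist \<theta>0 one_cluster < \<delta> \<longrightarrow>
      (\<exists>N m1 m2. (gd_step pstar \<alpha> ^^ N) \<theta>0 = (0, 1, m1, m2) \<and> dist (0, 1, m1, m2) one_cluster < r)"
    using reaches_single_cluster[OF assms(1,3)] by blast
  show ?thesis
  proof (rule exI[of _ \<delta>], intro conjI allI impI)
    show "0 < \<delta>"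
      by (fact \<open>0 < \<delta>\<close>)
    fix \<theta>0
    assume "(fst \<theta>0, fst (snd \<theta>0)) \<in> simplex2 \<and> dist \<theta>0 one_cluster < \<delta>"
    with reach obtain N m1 m2 where TN: "(gd_step pstar \<alpha> ^^ N) \<theta>0 = (0, 1, m1, m2)"
      and ball: "dist (0, 1, m1, m2) one_cluster < r"
      by blast
    have "(\<lambda>k. (gd_step pstar \<alpha> ^^ (k + N)) \<theta>0) \<longlonglongrightarrow> (0, 1, m1, xbar)"
      unfolding funpow_add o_apply TN by (rule converges_from_single_cluster[OF ball assms(1,2)])
    then have "(\<lambda>n. (gd_step pstar \<alpha> ^^ n) \<theta>0) \<longlonglongrightarrow> (0, 1, m1, xbar)"
      by (rule LIMSEQ_offset)
    then show "?converges \<theta>0"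
      by (metis fst_conv)
  qed
qed

end

theorem (in one_cluster_setting) one_cluster_attractive:
  "\<exists>\<alpha>0>0. \<forall>\<alpha>. 0 < \<alpha> \<and> \<alpha> < \<alpha>0 \<longrightarrow>
     (\<exists>\<delta>>0. \<forall>\<theta>0. (fst \<theta>0, fst (snd \<theta>0)) \<in> simplex2 \<and> dist \<theta>0 one_cluster < \<delta> \<longrightarrow>
        (\<exists>\<theta>lim. (\<lambda>n. (gd_step pstar \<alpha> ^^ n) \<theta>0) \<longlonglongrightarrow> \<theta>lim \<and> fst \<theta>lim = 0))"
proof -
  obtain r \<eta> M s0 where "one_cluster_ball pistar1 pistar2 mustar1 mustar2 mu1 r \<eta> M s0"
    using one_cluster_ball_exists by blast
  then interpret one_cluster_ball pistar1 pistar2 mustar1 mustar2 mu1 r \<eta> M s0 .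
  show ?thesis (is "\<exists>\<alpha>0>0. \<forall>\<alpha>. _ \<longrightarrow> ?attracts \<alpha>")
  proof (rule exI[of _ "min s0 (r / (4 * M))"], intro conjI allI impI)
    show "0 < min s0 (r / (4 * M))"
      using s0_pos r_pos M_pos by simp
    fix \<alpha> assume "0 < \<alpha> \<and> \<alpha> < min s0 (r / (4 * M))"
    then have "0 < \<alpha>" "\<alpha> < s0" "\<alpha> * M < r / 4"
      using M_pos by (simp_all add: field_simps)
    then show "?attracts \<alpha>"
      by (rule attracted)
  qed
qed

theorem mainTheorem4:
  fixes pistar1 pistar2 :: real
    and mustar1 mustar2 mu1 :: "real^'d::finite"
  assumes "0 < pistar1" "pistar1 < 1" "pistar2 = 1 - pistar1"
    and "\<forall>i. 0 \<le> mustar1$i \<and> mustar1$i \<le> 1"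
    and "\<forall>i. 0 \<le> mustar2$i \<and> mustar2$i \<le> 1"
    and "\<forall>i j. i \<noteq> j \<longrightarrow>
           4 * pistar1 * pistar2 * ((mustar1 - mustar2)/\<^sub>R 2)$i * ((mustar1 - mustar2)/\<^sub>R 2)$j \<noteq> 0"
    and "\<forall>i. 0 \<le> mu1$i \<and> mu1$i \<le> 1"
    and "Z1 pistar1 pistar2
           (lam (xmean (mix2 pistar1 pistar2 mustar1 mustar2)) ((mustar1 - mustar2)/\<^sub>R 2) mu1) < 1"
  shows "\<exists>\<alpha>0>0. \<forall>\<alpha>. 0 < \<alpha> \<and> \<alpha> < \<alpha>0 \<longrightarrow>
           (\<exists>\<delta>>0. \<forall>\<theta>0 :: 'd param.
              (fst \<theta>0, fst (snd \<theta>0)) \<in> simplex2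
              \<and> (\<forall>i. 0 \<le> fst (snd (snd \<theta>0))$i \<and> fst (snd (snd \<theta>0))$i \<le> 1)
              \<and> (\<forall>i. 0 \<le> snd (snd (snd \<theta>0))$i \<and> snd (snd (snd \<theta>0))$i \<le> 1)
              \<and> dist \<theta>0 (0, 1, mu1, xmean (mix2 pistar1 pistar2 mustar1 mustar2)) < \<delta>
              \<longrightarrow> (\<exists>\<theta>lim.
                     (\<lambda>n. (gd_step (mix2 pistar1 pistar2 mustar1 mustar2) \<alpha> ^^ n) \<theta>0) \<longlonglongrightarrow> \<theta>lim
                     \<and> fst \<theta>lim = 0))"
proof -
  interpret one_cluster_setting pistar1 pistar2 mustar1 mustar2 mu1
    using assms by unfold_locales auto
  show ?thesis
    using one_cluster_attractive by meson
qed

end
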